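(* Let $u_t\in\mathbb R^m$, $t=0,1,\dots$, be i.i.d. $\mathcal N(0,I_m)$. For integers $k\ge p\ge1$ define the $mp\times(k-p+1)$ block-Toeplitz matrix $$U=\begin{bmatrix}u_{k-p}&u_{k-p-1}&\cdots&u_0\\ u_{k-p+1}&u_{k-p}&\cdots&u_1\\ \vdots&&&\vdots\\ u_{k-1}&u_{k-2}&\cdots&u_{p-1}\end{bmatrix}.$$ Let $\delta\in(0,1)$. If $k\ge p+128\big(mp^2\log9+p\log2+p\log\frac1\delta\big)$, then with probability at least $1-\delta$, $$\tfrac12(k-p+1)I\preceq UU^*\preceq\tfrac32(k-p+1)I.$$ *)

theory Defs
  imports "HOL-Probability.Probability"
begin

text \<open>Rows are indexed by pairs
  (a, r) with a < p the block-row index and r < m the coordinate; columns by j with j \<le> k - p.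
  Block row a, block column j contains u_(k-p+a-j).\<close>
definition toepU :: "(nat \<Rightarrow> nat \<Rightarrow> real) \<Rightarrow> nat \<Rightarrow> nat \<Rightarrow> nat \<times> nat \<Rightarrow> nat \<Rightarrow> real" where
  "toepU v p k ar j = v (k - p + fst ar - j) (snd ar)"

definition rowIdx :: "nat \<Rightarrow> nat \<Rightarrow> (nat \<times> nat) set" where
  "rowIdx m p = {..<p} \<times> {..<m}"

text \<open>The mp x mp Gram matrix U U^* (U is real, so U^* = U^T).\<close>
definition gramUU :: "(nat \<Rightarrow> nat \<Rightarrow> real) \<Rightarrow> nat \<Rightarrow> nat \<Rightarrow> nat \<times> nat \<Rightarrow> nat \<times> nat \<Rightarrow> real" where
  "gramUU v p k i i' = (\<Sum>j\<in>{0..k-p}. toepU v p k i j * toepU v p k i' j)"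

definition loewner_between :: "('i set) \<Rightarrow> real \<Rightarrow> ('i \<Rightarrow> 'i \<Rightarrow> real) \<Rightarrow> real \<Rightarrow> bool" where
  "loewner_between I c A C \<longleftrightarrow>
     (\<forall>x :: 'i \<Rightarrow> real.
        c * (\<Sum>i\<in>I. (x i)\<^sup>2) \<le> (\<Sum>i\<in>I. \<Sum>i'\<in>I. x i * A i i' * x i') \<and>
        (\<Sum>i\<in>I. \<Sum>i'\<in>I. x i * A i i' * x i') \<le> C * (\<Sum>i\<in>I. (x i)\<^sup>2))"

end

theory Submission
  imports Defs
begin

text \<open>For a fixed unit vector y, the quadratic form y^T U U^T y = |U^T y|^2 is the sum of the
  squares of k - p + 1 Gaussians (U^T y)_j of variance |y|^2. They are not independent, but those
  with j in one residue class mod p involve disjoint sets of the u_t and are, so a Chernoff bound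
  for chi-square variables controls each class up to a factor 1 +/- 3/10 with probability
  1 - 2 exp(-((k-p+1) div p)/64). A union bound over the p classes and over a 1/9-net of the unit
  sphere of size 28^(mp) extends this to all y at once, which is what the hypothesis on k pays for;
  the net argument then turns the relative deviation 3/10 on the net into 15/31 < 1/2 everywhere.\<close>

section \<open>Quadratic forms\<close>

definition bilinear_form :: "('i \<Rightarrow> 'i \<Rightarrow> real) \<Rightarrow> 'i set \<Rightarrow> ('i \<Rightarrow> real) \<Rightarrow> ('i \<Rightarrow> real) \<Rightarrow> real" where
  "bilinear_form A I x y = (\<Sum>i\<in>I. \<Sum>i'\<in>I. x i * A i i' * y i')"

definition sq_norm :: "'i set \<Rightarrow> ('i \<Rightarrow> real) \<Rightarrow> real" where
  "sq_norm I x = (\<Sum>i\<in>I. (x i)\<^sup>2)"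

lemma loewner_between_iff_forms:
  "loewner_between I c A C \<longleftrightarrow>
     (\<forall>x. c * sq_norm I x \<le> bilinear_form A I x x \<and> bilinear_form A I x x \<le> C * sq_norm I x)"
  unfolding loewner_between_def bilinear_form_def sq_norm_def ..

lemma sq_norm_nonneg: "0 \<le> sq_norm I x"
  unfolding sq_norm_def by (simp add: sum_nonneg)

lemma sqrt_sq_norm_eq_L2_set: "sqrt (sq_norm I x) = L2_set x I"
  unfolding L2_set_def sq_norm_def by simp

lemma sqrt_sq_norm_le: "sq_norm I x \<le> r\<^sup>2 \<Longrightarrow> 0 \<le> r \<Longrightarrow> sqrt (sq_norm I x) \<le> r"
  using real_sqrt_le_iff[of "sq_norm I x" "r\<^sup>2"] by simp

lemma sq_norm_eq_0_imp: "finite I \<Longrightarrow> sq_norm I x = 0 \<Longrightarrow> i \<in> I \<Longrightarrow> x i = 0"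
  unfolding sq_norm_def by (simp add: sum_nonneg_eq_0_iff)

lemma sq_norm_scale: "sq_norm I (\<lambda>i. c * x i) = c\<^sup>2 * sq_norm I x"
  unfolding sq_norm_def by (simp add: power_mult_distrib sum_distrib_left)

lemma sq_norm_diff_commute: "sq_norm I (\<lambda>i. x i - y i) = sq_norm I (\<lambda>i. y i - x i)"
  unfolding sq_norm_def by (simp add: power2_commute)

lemma sq_norm_parallelogram:
  "sq_norm I (\<lambda>i. a i + b i) + sq_norm I (\<lambda>i. a i - b i) = 2 * sq_norm I a + 2 * sq_norm I b"
  unfolding sq_norm_def sum_distrib_left sum.distrib[symmetric]
  by (rule sum.cong) (simp_all add: power2_eq_square algebra_simps)

lemma bilinear_form_add_left: "bilinear_form A I (\<lambda>i. x i + z i) y = bilinear_form A I x y + bilinear_form A I z y"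
  unfolding bilinear_form_def by (simp add: algebra_simps sum.distrib)

lemma bilinear_form_diff_left: "bilinear_form A I (\<lambda>i. x i - z i) y = bilinear_form A I x y - bilinear_form A I z y"
  unfolding bilinear_form_def by (simp add: algebra_simps sum_subtractf)

lemma bilinear_form_add_right: "bilinear_form A I x (\<lambda>i. y i + z i) = bilinear_form A I x y + bilinear_form A I x z"
  unfolding bilinear_form_def by (simp add: algebra_simps sum.distrib)

lemma bilinear_form_diff_right: "bilinear_form A I x (\<lambda>i. y i - z i) = bilinear_form A I x y - bilinear_form A I x z"
  unfolding bilinear_form_def by (simp add: algebra_simps sum_subtractf)

lemma bilinear_form_scale_left: "bilinear_form A I (\<lambda>i. c * x i) y = c * bilinear_form A I x y"
  unfolding bilinear_form_def by (simp add: algebra_simps sum_distrib_left)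

lemma bilinear_form_scale_right: "bilinear_form A I x (\<lambda>i. c * y i) = c * bilinear_form A I x y"
  unfolding bilinear_form_def by (simp add: algebra_simps sum_distrib_left)

lemmas bilinear_form_linear =
  bilinear_form_add_left bilinear_form_add_right bilinear_form_diff_left bilinear_form_diff_right

lemma bilinear_form_commute:
  assumes "\<And>i i'. i \<in> I \<Longrightarrow> i' \<in> I \<Longrightarrow> A i i' = A i' i"
  shows "bilinear_form A I x y = bilinear_form A I y x"
  unfolding bilinear_form_def
  by (subst sum.swap) (auto intro!: sum.cong simp: assms mult.commute mult.left_commute)

lemma bilinear_form_sq_norm_0_left: "finite I \<Longrightarrow> sq_norm I x = 0 \<Longrightarrow> bilinear_form A I x y = 0"
  unfolding bilinear_form_def by (simp add: sq_norm_eq_0_imp)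

lemma bilinear_form_sq_norm_0_right: "finite I \<Longrightarrow> sq_norm I y = 0 \<Longrightarrow> bilinear_form A I x y = 0"
  unfolding bilinear_form_def by (simp add: sq_norm_eq_0_imp)

lemma bilinear_form_diag_shift:
  assumes "finite I"
  shows "bilinear_form (\<lambda>i i'. G i i' - c * (if i = i' then 1 else 0)) I x x
           = bilinear_form G I x x - c * sq_norm I x"
proof -
  have row: "(\<Sum>i'\<in>I. x i * (G i i' - c * (if i = i' then 1 else 0)) * x i')
      = (\<Sum>i'\<in>I. x i * G i i' * x i') - c * (x i)\<^sup>2" if "i \<in> I" for i
  proof -
    have "(\<Sum>i'\<in>I. x i * (G i i' - c * (if i = i' then 1 else 0)) * x i')
        = (\<Sum>i'\<in>I. x i * G i i' * x i' - (if i = i' then c * (x i * x i') else 0))"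
      by (intro sum.cong refl) (auto simp: algebra_simps)
    also have "\<dots> = (\<Sum>i'\<in>I. x i * G i i' * x i') - c * (x i)\<^sup>2"
      using that assms by (simp add: sum_subtractf power2_eq_square)
    finally show ?thesis .
  qed
  show ?thesis unfolding bilinear_form_def sq_norm_def
    by (simp add: row sum_subtractf sum_distrib_left cong: sum.cong)
qed

lemma bilinear_form_gram:
  "bilinear_form (\<lambda>i i'. \<Sum>j\<in>J. a i j * a i' j) I x x = (\<Sum>j\<in>J. (\<Sum>i\<in>I. x i * a i j)\<^sup>2)"
proof -
  have "(\<Sum>j\<in>J. (\<Sum>i\<in>I. x i * a i j)\<^sup>2) = (\<Sum>j\<in>J. \<Sum>i\<in>I. \<Sum>i'\<in>I. x i * a i j * (x i' * a i' j))"
    by (simp only: power2_eq_square sum_product)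
  also have "\<dots> = (\<Sum>i\<in>I. \<Sum>j\<in>J. \<Sum>i'\<in>I. x i * a i j * (x i' * a i' j))"
    by (rule sum.swap)
  also have "\<dots> = (\<Sum>i\<in>I. \<Sum>i'\<in>I. \<Sum>j\<in>J. x i * a i j * (x i' * a i' j))"
    by (intro sum.cong refl sum.swap)
  also have "\<dots> = bilinear_form (\<lambda>i i'. \<Sum>j\<in>J. a i j * a i' j) I x x"
    unfolding bilinear_form_def
    by (intro sum.cong refl) (simp add: sum_distrib_left sum_distrib_right ac_simps)
  finally show ?thesis ..
qed

lemma bdd_above_quad_form_unit_ball:
  assumes "finite I"
  shows "bdd_above ((\<lambda>x. \<bar>bilinear_form A I x x\<bar>) ` {x. sq_norm I x \<le> 1})"
proof (rule bdd_aboveI2)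
  fix x assume x: "x \<in> {x. sq_norm I x \<le> 1}"
  have x_le_1: "\<bar>x i\<bar> \<le> 1" if "i \<in> I" for i
  proof -
    have "(x i)\<^sup>2 \<le> sq_norm I x"
      unfolding sq_norm_def by (rule member_le_sum) (use that assms in auto)
    also have "\<dots> \<le> 1" using x by simp
    finally show ?thesis by (simp add: abs_square_le_1)
  qed
  have "\<bar>bilinear_form A I x x\<bar> \<le> (\<Sum>i\<in>I. \<Sum>i'\<in>I. \<bar>x i * A i i' * x i'\<bar>)"
    unfolding bilinear_form_def by (rule order.trans[OF sum_abs]) (intro sum_mono sum_abs)
  also have "\<dots> \<le> (\<Sum>i\<in>I. \<Sum>i'\<in>I. \<bar>A i i'\<bar>)"
  proof (intro sum_mono)
    fix i i' assume "i \<in> I" "i' \<in> I"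
    then have "\<bar>x i\<bar> * \<bar>A i i'\<bar> * \<bar>x i'\<bar> \<le> 1 * \<bar>A i i'\<bar> * 1"
      using x_le_1 by (intro mult_mono) auto
    then show "\<bar>x i * A i i' * x i'\<bar> \<le> \<bar>A i i'\<bar>" by (simp add: abs_mult)
  qed
  finally show "\<bar>bilinear_form A I x x\<bar> \<le> (\<Sum>i\<in>I. \<Sum>i'\<in>I. \<bar>A i i'\<bar>)" .
qed

lemma quad_form_bound_of_unit_ball:
  assumes "finite I" and unit: "\<And>x. sq_norm I x \<le> 1 \<Longrightarrow> \<bar>bilinear_form A I x x\<bar> \<le> K"
  shows "\<bar>bilinear_form A I v v\<bar> \<le> K * sq_norm I v"
proof (cases "sq_norm I v = 0")
  case True
  then show ?thesis by (simp add: bilinear_form_sq_norm_0_left assms)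
next
  case False
  then have pos: "0 < sq_norm I v" using sq_norm_nonneg[of I v] by simp
  define s where "s = sqrt (sq_norm I v)"
  have s: "0 < s" "s\<^sup>2 = sq_norm I v" using pos by (auto simp: s_def)
  define w where "w = (\<lambda>i. v i / s)"
  have vw: "v = (\<lambda>i. s * w i)" using s by (auto simp: w_def)
  have "sq_norm I v = s\<^sup>2 * sq_norm I w" by (subst vw) (rule sq_norm_scale)
  then have "sq_norm I w = 1" using s pos by simp
  have "bilinear_form A I v v = s\<^sup>2 * bilinear_form A I w w"
    by (subst (1 2) vw) (simp add: bilinear_form_scale_left bilinear_form_scale_right power2_eq_square)
  then have "\<bar>bilinear_form A I v v\<bar> = sq_norm I v * \<bar>bilinear_form A I w w\<bar>"
    using s pos by (simp add: abs_mult)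
  also have "\<dots> \<le> sq_norm I v * K"
    using unit[of w] \<open>sq_norm I w = 1\<close> pos by (intro mult_left_mono) auto
  finally show ?thesis by (simp add: mult.commute)
qed

text \<open>Polarization; rescaling a by c and b by 1/c with c^2 = |b|/|a| balances the two norms.\<close>
lemma bilinear_form_bound_of_diagonal:
  assumes fin: "finite I" and sym: "\<And>i i'. i \<in> I \<Longrightarrow> i' \<in> I \<Longrightarrow> A i i' = A i' i"
    and diag: "\<And>v. \<bar>bilinear_form A I v v\<bar> \<le> K * sq_norm I v"
  shows "\<bar>bilinear_form A I a b\<bar> \<le> K * sqrt (sq_norm I a) * sqrt (sq_norm I b)"
proof (cases "sq_norm I a = 0 \<or> sq_norm I b = 0")
  case True
  then show ?thesis by (auto simp: bilinear_form_sq_norm_0_left bilinear_form_sq_norm_0_right fin)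
next
  case False
  then have pa: "0 < sq_norm I a" and pb: "0 < sq_norm I b"
    using sq_norm_nonneg[of I a] sq_norm_nonneg[of I b] by auto
  have polar: "4 * \<bar>bilinear_form A I a' b'\<bar> \<le> 2 * K * (sq_norm I a' + sq_norm I b')" for a' b'
  proof -
    have "4 * bilinear_form A I a' b'
        = bilinear_form A I (\<lambda>i. a' i + b' i) (\<lambda>i. a' i + b' i) - bilinear_form A I (\<lambda>i. a' i - b' i) (\<lambda>i. a' i - b' i)"
      using bilinear_form_commute[OF sym, where x=a' and y=b'] by (simp add: bilinear_form_linear)
    then have "4 * \<bar>bilinear_form A I a' b'\<bar>
        \<le> K * (sq_norm I (\<lambda>i. a' i + b' i) + sq_norm I (\<lambda>i. a' i - b' i))"
      using diag[of "\<lambda>i. a' i + b' i"] diag[of "\<lambda>i. a' i - b' i"] unfolding distrib_left by linarith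
    then show ?thesis unfolding sq_norm_parallelogram by (simp add: algebra_simps)
  qed
  define la where "la = sqrt (sq_norm I a)"
  define lb where "lb = sqrt (sq_norm I b)"
  have la: "0 < la" "la\<^sup>2 = sq_norm I a" using pa by (auto simp: la_def)
  have lb: "0 < lb" "lb\<^sup>2 = sq_norm I b" using pb by (auto simp: lb_def)
  define c where "c = sqrt (lb / la)"
  have c: "0 < c" "c\<^sup>2 = lb / la" using la lb by (auto simp: c_def)
  have "sq_norm I (\<lambda>i. c * a i) = c\<^sup>2 * la\<^sup>2" by (simp add: sq_norm_scale la(2))
  also have "\<dots> = la * lb" using c(2) la(1) by (simp add: power2_eq_square field_simps)
  finally have "sq_norm I (\<lambda>i. c * a i) = la * lb" .
  moreover have "sq_norm I (\<lambda>i. (1/c) * b i) = (1/c)\<^sup>2 * lb\<^sup>2" by (simp only: sq_norm_scale lb(2))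
  moreover have "(1/c)\<^sup>2 * lb\<^sup>2 = la * lb"
    using c lb(1) la(1) by (simp add: power2_eq_square power_divide field_simps)
  moreover have "bilinear_form A I (\<lambda>i. c * a i) (\<lambda>i. (1/c) * b i) = bilinear_form A I a b"
    unfolding bilinear_form_scale_left bilinear_form_scale_right using c by simp
  ultimately have "4 * \<bar>bilinear_form A I a b\<bar> \<le> 2 * K * (la * lb + la * lb)"
    using polar[of "\<lambda>i. c * a i" "\<lambda>i. (1/c) * b i"] by simp
  then show ?thesis by (simp add: la_def lb_def)
qed

text \<open>With M the maximum of |x^T A x| on the unit ball, approximating a unit x by y in the net gives
  x^T A x = y^T A y + (x - y)^T A (x + y), whence M \<le> T + M \<epsilon> (2 + \<epsilon>).\<close>
lemma quad_form_bound_of_net: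
  assumes fin: "finite I"
    and sym: "\<And>i i'. i \<in> I \<Longrightarrow> i' \<in> I \<Longrightarrow> A i i' = A i' i"
    and eps: "0 < \<epsilon>" "0 < 1 - 2*\<epsilon> - \<epsilon>\<^sup>2"
    and net: "\<And>x. sq_norm I x \<le> 1 \<Longrightarrow> \<exists>y\<in>S. sq_norm I (\<lambda>i. x i - y i) \<le> \<epsilon>\<^sup>2 \<and> sq_norm I y \<le> (1+\<epsilon>)\<^sup>2"
    and net_bound: "\<And>y. y \<in> S \<Longrightarrow> \<bar>bilinear_form A I y y\<bar> \<le> T"
  shows "\<bar>bilinear_form A I x x\<bar> \<le> T / (1 - 2*\<epsilon> - \<epsilon>\<^sup>2) * sq_norm I x"
proof -
  define B where "B = {x. sq_norm I x \<le> 1}"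
  define Mx where "Mx = Sup ((\<lambda>x. \<bar>bilinear_form A I x x\<bar>) ` B)"
  have Mx_upper: "\<bar>bilinear_form A I x x\<bar> \<le> Mx" if "x \<in> B" for x
    unfolding Mx_def B_def
    by (rule cSup_upper) (use that bdd_above_quad_form_unit_ball[OF fin] in \<open>auto simp: B_def\<close>)
  have zero_in_B: "(\<lambda>i. 0) \<in> B" by (simp add: B_def sq_norm_def)
  have diag: "\<bar>bilinear_form A I v v\<bar> \<le> Mx * sq_norm I v" for v
    by (rule quad_form_bound_of_unit_ball[OF fin]) (simp add: Mx_upper B_def)
  have Mx_nonneg: "0 \<le> Mx" using Mx_upper[OF zero_in_B] by simp
  have step: "\<bar>bilinear_form A I x x\<bar> \<le> T + Mx * (\<epsilon> * (2 + \<epsilon>))" if "x \<in> B" for x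
  proof -
    from that have x1: "sq_norm I x \<le> 1" by (simp add: B_def)
    from net[OF x1] obtain y where y: "y \<in> S" "sq_norm I (\<lambda>i. x i - y i) \<le> \<epsilon>\<^sup>2" "sq_norm I y \<le> (1+\<epsilon>)\<^sup>2"
      by blast
    have "bilinear_form A I x x = bilinear_form A I y y + bilinear_form A I (\<lambda>i. x i - y i) (\<lambda>i. x i + y i)"
      using bilinear_form_commute[OF sym, where x=x and y=y] by (simp add: bilinear_form_linear)
    moreover have "\<bar>bilinear_form A I (\<lambda>i. x i - y i) (\<lambda>i. x i + y i)\<bar>
        \<le> Mx * sqrt (sq_norm I (\<lambda>i. x i - y i)) * sqrt (sq_norm I (\<lambda>i. x i + y i))"
      by (rule bilinear_form_bound_of_diagonal[OF fin sym diag])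
    moreover have "Mx * sqrt (sq_norm I (\<lambda>i. x i - y i)) * sqrt (sq_norm I (\<lambda>i. x i + y i))
        \<le> Mx * \<epsilon> * (2 + \<epsilon>)"
    proof (intro mult_mono mult_left_mono)
      show "sqrt (sq_norm I (\<lambda>i. x i - y i)) \<le> \<epsilon>"
        using sqrt_sq_norm_le[OF y(2)] eps by simp
      have "sqrt (sq_norm I (\<lambda>i. x i + y i)) \<le> sqrt (sq_norm I x) + sqrt (sq_norm I y)"
        using L2_set_triangle_ineq[of x y I] by (simp add: sqrt_sq_norm_eq_L2_set)
      also have "\<dots> \<le> 1 + (1 + \<epsilon>)"
        using sqrt_sq_norm_le[of I x 1] x1 sqrt_sq_norm_le[OF y(3)] eps by (intro add_mono) auto
      finally show "sqrt (sq_norm I (\<lambda>i. x i + y i)) \<le> 2 + \<epsilon>" by simp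
    qed (use eps Mx_nonneg in \<open>auto simp: sq_norm_nonneg\<close>)
    ultimately show ?thesis
      using net_bound[OF y(1)] by (simp add: mult.assoc)
  qed
  have "Mx \<le> T + Mx * (\<epsilon> * (2 + \<epsilon>))"
    unfolding Mx_def by (rule cSup_least) (use zero_in_B step[unfolded Mx_def] in auto)
  then have "Mx * (1 - 2*\<epsilon> - \<epsilon>\<^sup>2) \<le> T" by (simp add: algebra_simps power2_eq_square)
  then have "Mx \<le> T / (1 - 2*\<epsilon> - \<epsilon>\<^sup>2)" using eps by (simp add: pos_le_divide_eq)
  then show ?thesis using diag[of x] sq_norm_nonneg[of I x]
    by (meson mult_right_mono order.trans)
qed

section \<open>A finite net of the unit ball\<close>

lemma sum_power_abs_symmetric_interval:
  "(\<Sum>a\<in>{-int K..int K}. (4/5::real) ^ nat \<bar>a\<bar>) = 9 - 8 * (4/5) ^ K"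
proof (induction K)
  case 0
  then show ?case by simp
next
  case (Suc K)
  have e: "{-int (Suc K)..int (Suc K)} = insert (int (Suc K)) (insert (- int (Suc K)) {-int K..int K})"
    by auto
  have "(\<Sum>a\<in>{-int (Suc K)..int (Suc K)}. (4/5::real) ^ nat \<bar>a\<bar>)
      = (4/5) ^ nat \<bar>int (Suc K)\<bar> + ((4/5) ^ nat \<bar>- int (Suc K)\<bar> + (\<Sum>a\<in>{-int K..int K}. (4/5::real) ^ nat \<bar>a\<bar>))"
    unfolding e by (subst sum.insert, simp, simp)+ rule
  moreover have "nat \<bar>int (Suc K)\<bar> = Suc K" "nat \<bar>- int (Suc K)\<bar> = Suc K" by auto
  ultimately show ?case using Suc by simp
qed

lemma card_int_vectors_l1_bounded:
  fixes I :: "'i set"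
  assumes fin: "finite I"
  shows "real (card {z \<in> PiE I (\<lambda>_. {-int L..int L}). (\<Sum>i\<in>I. nat \<bar>z i\<bar>) \<le> L}) \<le> (5/4) ^ L * 9 ^ card I"
proof -
  define F where "F = (\<lambda>_::'i. {-int L..int L})"
  define Z where "Z = {z \<in> PiE I F. (\<Sum>i\<in>I. nat \<bar>z i\<bar>) \<le> L}"
  have "real (card Z) = (\<Sum>z\<in>Z. 1)" by simp
  also have "\<dots> \<le> (\<Sum>z\<in>Z. (5/4) ^ L * (4/5::real) ^ (\<Sum>i\<in>I. nat \<bar>z i\<bar>))"
  proof (rule sum_mono)
    fix z assume "z \<in> Z"
    then have "(5/4::real) ^ L * (4/5) ^ L \<le> (5/4) ^ L * (4/5) ^ (\<Sum>i\<in>I. nat \<bar>z i\<bar>)"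
      by (intro mult_left_mono power_decreasing) (auto simp: Z_def)
    then show "1 \<le> (5/4) ^ L * (4/5::real) ^ (\<Sum>i\<in>I. nat \<bar>z i\<bar>)"
      by (simp flip: power_mult_distrib)
  qed
  also have "\<dots> \<le> (\<Sum>z\<in>PiE I F. (5/4) ^ L * (4/5::real) ^ (\<Sum>i\<in>I. nat \<bar>z i\<bar>))"
    by (rule sum_mono2) (use fin in \<open>auto simp: Z_def F_def intro!: finite_PiE\<close>)
  also have "\<dots> = (5/4) ^ L * (\<Prod>i\<in>I. \<Sum>a\<in>F i. (4/5::real) ^ nat \<bar>a\<bar>)"
    by (subst prod_sum_PiE) (auto simp: fin F_def sum_distrib_left power_sum)
  also have "\<dots> \<le> (5/4) ^ L * (\<Prod>i\<in>I. 9)"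
    using power_le_one[of "4/5::real" L]
    by (intro mult_left_mono prod_mono) (auto simp: F_def sum_power_abs_symmetric_interval intro: sum_nonneg)
  finally show ?thesis by (simp add: Z_def F_def)
qed

lemma sum_nat_abs_le_of_sum_squares_le:
  fixes z :: "'i \<Rightarrow> int"
  assumes "(\<Sum>i\<in>I. (real_of_int (z i))\<^sup>2) \<le> 25 * card I"
  shows "(\<Sum>i\<in>I. nat \<bar>z i\<bar>) \<le> 5 * card I"
proof -
  have "10 * (\<Sum>i\<in>I. real (nat \<bar>z i\<bar>)) \<le> (\<Sum>i\<in>I. (real_of_int (z i))\<^sup>2 + 25)"
    unfolding sum_distrib_left
  proof (intro sum_mono)
    fix i
    have "0 \<le> (\<bar>real_of_int (z i)\<bar> - 5)\<^sup>2" by simp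
    then show "10 * real (nat \<bar>z i\<bar>) \<le> (real_of_int (z i))\<^sup>2 + 25"
      by (simp add: power2_eq_square algebra_simps)
  qed
  also have "\<dots> \<le> 50 * card I" using assms by (simp add: sum.distrib)
  finally have "real (\<Sum>i\<in>I. nat \<bar>z i\<bar>) \<le> real (5 * card I)" by simp
  then show ?thesis by (simp only: of_nat_le_iff)
qed

lemma sq_norm_round_grid_le:
  assumes "finite I" "0 < h"
  shows "sq_norm I (\<lambda>i. x i - h * of_int (round (x i / h))) \<le> real (card I) * (h / 2)\<^sup>2"
proof -
  have "(x i - h * of_int (round (x i / h)))\<^sup>2 \<le> (h / 2)\<^sup>2" for i
  proof -
    have "x i - h * of_int (round (x i / h)) = h * (x i / h - of_int (round (x i / h)))"
      using assms(2) by (simp add: field_simps)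
    then have "\<bar>x i - h * of_int (round (x i / h))\<bar> = h * \<bar>of_int (round (x i / h)) - x i / h\<bar>"
      using assms(2) by (simp add: abs_mult abs_minus_commute)
    also have "\<dots> \<le> h * (1/2)"
      using of_int_round_abs_le[of "x i / h"] assms(2) by (intro mult_left_mono) auto
    finally have "\<bar>x i - h * of_int (round (x i / h))\<bar> \<le> \<bar>h / 2\<bar>" using assms(2) by simp
    then show ?thesis by (simp only: abs_le_square_iff)
  qed
  then show ?thesis unfolding sq_norm_def using sum_mono[of I] by (simp add: sum_bounded_above)
qed

text \<open>The net is the grid h Z^I with h = 2 / (9 sqrt n), restricted to the points within
  distance 1 + 1/9 of the origin; these have l1-norm at most 5n on the integer side.\<close>
lemma exists_net_unit_ball:
  fixes I :: "'i set"
  assumes fin: "finite I" and ne: "I \<noteq> {}"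
  shows "\<exists>S. finite S \<and> real (card S) \<le> 28 ^ card I \<and>
    (\<forall>x. sq_norm I x \<le> 1 \<longrightarrow>
       (\<exists>y\<in>S. sq_norm I (\<lambda>i. x i - y i) \<le> (1/9)\<^sup>2 \<and> sq_norm I y \<le> (1 + 1/9)\<^sup>2))"
proof -
  define n where "n = card I"
  have n: "1 \<le> n" using fin ne by (simp add: n_def Suc_le_eq card_gt_0_iff)
  define h :: real where "h = 2 / (9 * sqrt n)"
  have h: "0 < h" "h\<^sup>2 * n = 4/81" using n by (simp_all add: h_def power2_eq_square field_simps)
  define Z where "Z = {z \<in> PiE I (\<lambda>_. {-int (5*n)..int (5*n)}). (\<Sum>i\<in>I. nat \<bar>z i\<bar>) \<le> 5*n}"
  define emb where "emb = (\<lambda>z::'i \<Rightarrow> int. \<lambda>i. if i \<in> I then h * of_int (z i) else 0)"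
  define S where "S = emb ` Z"
  have "finite Z" unfolding Z_def using fin by (auto intro!: finite_PiE)
  have "real (card S) \<le> real (card Z)" unfolding S_def using card_image_le[OF \<open>finite Z\<close>] by simp
  also have "\<dots> \<le> ((5/4) ^ 5 * 9) ^ n"
    using card_int_vectors_l1_bounded[OF fin, of "5*n"] by (simp add: Z_def n_def power_mult power_mult_distrib)
  also have "\<dots> \<le> 28 ^ n" by (intro power_mono) (auto simp: power_divide)
  finally have card_S: "real (card S) \<le> 28 ^ n" .
  have "\<exists>y\<in>S. sq_norm I (\<lambda>i. x i - y i) \<le> (1/9)\<^sup>2 \<and> sq_norm I y \<le> (1 + 1/9)\<^sup>2"
    if x1: "sq_norm I x \<le> 1" for x
  proof -
    define z where "z = restrict (\<lambda>i. round (x i / h)) I"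
    define y where "y = emb z"
    have "sq_norm I (\<lambda>i. x i - y i) = sq_norm I (\<lambda>i. x i - h * of_int (round (x i / h)))"
      unfolding sq_norm_def by (intro sum.cong) (auto simp: y_def emb_def z_def)
    also have "\<dots> \<le> n * (h / 2)\<^sup>2" using sq_norm_round_grid_le[OF fin h(1)] by (simp add: n_def)
    also have "\<dots> = (1/9)\<^sup>2" using h(2) by (simp add: power_divide algebra_simps)
    finally have close: "sq_norm I (\<lambda>i. x i - y i) \<le> (1/9)\<^sup>2" .
    have "sqrt (sq_norm I y) \<le> sqrt (sq_norm I x) + sqrt (sq_norm I (\<lambda>i. y i - x i))"
      using L2_set_triangle_ineq[of x "\<lambda>i. y i - x i" I] by (simp add: sqrt_sq_norm_eq_L2_set)
    also have "sq_norm I (\<lambda>i. y i - x i) = sq_norm I (\<lambda>i. x i - y i)"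
      by (rule sq_norm_diff_commute)
    also have "sqrt (sq_norm I x) + sqrt (sq_norm I (\<lambda>i. x i - y i)) \<le> 1 + 1/9"
      using sqrt_sq_norm_le[of I x 1] x1 sqrt_sq_norm_le[OF close] by (intro add_mono) auto
    finally have y_small: "sq_norm I y \<le> (1 + 1/9)\<^sup>2"
      using real_sqrt_le_iff[of "sq_norm I y" "(1 + 1/9)\<^sup>2"] by simp
    have "sq_norm I y = h\<^sup>2 * (\<Sum>i\<in>I. (of_int (z i))\<^sup>2)"
      unfolding sq_norm_def y_def emb_def by (simp add: power_mult_distrib sum_distrib_left)
    with y_small have "h\<^sup>2 * n * (\<Sum>i\<in>I. (real_of_int (z i))\<^sup>2) \<le> (10/9)\<^sup>2 * n"
      using n by (simp add: mult_right_mono ac_simps)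
    then have "(\<Sum>i\<in>I. (real_of_int (z i))\<^sup>2) \<le> 25 * card I"
      unfolding h(2) by (simp add: power2_eq_square n_def)
    then have l1: "(\<Sum>i\<in>I. nat \<bar>z i\<bar>) \<le> 5 * n"
      unfolding n_def by (rule sum_nat_abs_le_of_sum_squares_le)
    have "\<bar>z i\<bar> \<le> int (5 * n)" if "i \<in> I" for i
      using member_le_sum[of i I "\<lambda>i. nat \<bar>z i\<bar>"] that fin l1 by linarith
    then have "z \<in> Z" using l1 unfolding Z_def z_def by (auto simp: abs_le_iff) (metis minus_le_iff)
    then show ?thesis using close y_small by (auto simp: S_def y_def)
  qed
  with \<open>finite Z\<close> card_S show ?thesis unfolding S_def n_def by blast
qed

section \<open>Concentration of chi-square variables\<close>

lemma nn_integral_normal_density: "0 < \<sigma> \<Longrightarrow> (\<integral>\<^sup>+x. ennreal (normal_density \<mu> \<sigma> x) \<partial>lborel) = 1"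
  by (subst nn_integral_eq_integral)
    (auto simp: normal_density_nonneg integrable_normal_density integral_normal_density)

text \<open>The integrand is a multiple of the centred normal density with variance 1 / (1 - 2 s).\<close>
lemma nn_integral_std_normal_exp_square:
  fixes s :: real
  assumes s: "s < 1/2"
  shows "(\<integral>\<^sup>+x. ennreal (std_normal_density x) * ennreal (exp (s * x\<^sup>2)) \<partial>lborel)
         = ennreal (1 / sqrt (1 - 2 * s))"
proof -
  define \<tau> where "\<tau> = 1 / sqrt (1 - 2 * s)"
  have \<tau>: "0 < \<tau>" "\<tau>\<^sup>2 = 1 / (1 - 2 * s)" using s by (simp_all add: \<tau>_def power_divide)
  have density: "std_normal_density x * exp (s * x\<^sup>2) = \<tau> * normal_density 0 \<tau> x" for x
  proof -
    have "sqrt (2 * pi * \<tau>\<^sup>2) = sqrt (2 * pi) * \<tau>" using \<tau>(1) by (simp add: real_sqrt_mult)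
    moreover have "- x\<^sup>2 / 2 + s * x\<^sup>2 = - (x - 0)\<^sup>2 / (2 * \<tau>\<^sup>2)"
      using s by (simp add: \<tau>(2) field_simps)
    ultimately show ?thesis
      using \<tau> by (simp add: std_normal_density_def normal_density_def exp_add[symmetric] field_simps)
  qed
  have "(\<integral>\<^sup>+x. ennreal (std_normal_density x) * ennreal (exp (s * x\<^sup>2)) \<partial>lborel)
      = (\<integral>\<^sup>+x. ennreal \<tau> * ennreal (normal_density 0 \<tau> x) \<partial>lborel)"
    by (intro nn_integral_cong) (use \<tau> in \<open>simp add: density[symmetric] ennreal_mult'[symmetric]\<close>)
  also have "\<dots> = ennreal \<tau>"
    by (subst nn_integral_cmult) (auto simp: nn_integral_normal_density[OF \<tau>(1)])
  finally show ?thesis by (simp add: \<tau>_def)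
qed

lemma chi_square_upper_rate_le: "exp (- (3/26) * (13/10)) / sqrt (1 - 2 * (3/26)) \<le> exp (- 1/64 :: real)"
proof -
  have "sqrt (13/10) \<le> exp (43/320::real)"
  proof (rule real_le_lsqrt)
    show "13/10 \<le> (exp (43/320::real))\<^sup>2"
      using exp_lower_Taylor_quadratic[of "43/160::real"]
      by (simp add: power2_eq_square flip: exp_add)
  qed auto
  then have "exp (- 3/20) * sqrt (13/10) \<le> exp (- 3/20) * exp (43/320::real)"
    by (rule mult_left_mono) simp
  also have "\<dots> = exp (- 1/64)" by (simp flip: exp_add)
  finally show ?thesis by (simp add: real_sqrt_divide)
qed

lemma chi_square_lower_rate_le: "exp (1/8 * (7/10)) / sqrt (1 + 2 * (1/8)) \<le> exp (- 1/64 :: real)"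
proof -
  have "exp (33/160::real) \<le> 1 + 33/160 + (33/160)\<^sup>2"
    by (rule exp_bound) simp_all
  then have "exp (33/160::real) \<le> 5/4" by (simp add: power2_eq_square)
  then have "exp (7/40::real) * exp (1/32) \<le> 5/4" by (simp flip: exp_add)
  then have "(exp (7/80) * exp (1/64::real))\<^sup>2 \<le> 5/4"
    by (simp add: power2_eq_square flip: exp_add)
  then have "exp (7/80) * exp (1/64::real) \<le> sqrt (5/4)"
    by (rule real_le_rsqrt)
  then show ?thesis by (simp add: exp_minus field_simps)
qed

context prob_space
begin

lemma nn_integral_exp_sum_squares:
  assumes fin: "finite J" and ind: "indep_vars (\<lambda>_. borel) W J"
    and dist: "\<And>j. j \<in> J \<Longrightarrow> distributed M lborel (W j) std_normal_density"
    and s: "s < 1/2"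
  shows "(\<integral>\<^sup>+\<omega>. ennreal (exp (s * (\<Sum>j\<in>J. (W j \<omega>)\<^sup>2))) \<partial>M) = ennreal ((1 / sqrt (1 - 2 * s)) ^ card J)"
proof -
  have "(\<integral>\<^sup>+\<omega>. ennreal (exp (s * (\<Sum>j\<in>J. (W j \<omega>)\<^sup>2))) \<partial>M)
      = (\<integral>\<^sup>+\<omega>. (\<Prod>j\<in>J. ennreal (exp (s * (W j \<omega>)\<^sup>2))) \<partial>M)"
    by (intro nn_integral_cong) (simp add: sum_distrib_left exp_sum fin prod_ennreal)
  also have "\<dots> = (\<Prod>j\<in>J. \<integral>\<^sup>+\<omega>. ennreal (exp (s * (W j \<omega>)\<^sup>2)) \<partial>M)"
    by (intro indep_vars_nn_integral fin indep_vars_compose2[OF ind]) auto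
  also have "\<dots> = (\<Prod>j\<in>J. ennreal (1 / sqrt (1 - 2 * s)))"
  proof (intro prod.cong refl)
    fix j assume "j \<in> J"
    have "(\<integral>\<^sup>+\<omega>. ennreal (exp (s * (W j \<omega>)\<^sup>2)) \<partial>M)
        = (\<integral>\<^sup>+x. ennreal (std_normal_density x) * ennreal (exp (s * x\<^sup>2)) \<partial>lborel)"
      by (rule distributed_nn_integral[OF dist[OF \<open>j \<in> J\<close>], symmetric]) simp
    then show "(\<integral>\<^sup>+\<omega>. ennreal (exp (s * (W j \<omega>)\<^sup>2)) \<partial>M) = ennreal (1 / sqrt (1 - 2 * s))"
      using nn_integral_std_normal_exp_square[OF s] by simp
  qed
  also have "\<dots> = ennreal ((1 / sqrt (1 - 2 * s)) ^ card J)"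
    by (subst ennreal_power[symmetric]) (use s in auto)
  finally show ?thesis .
qed

lemma sum_squares_upper_tail:
  assumes fin: "finite J" and ind: "indep_vars (\<lambda>_. borel) W J"
    and dist: "\<And>j. j \<in> J \<Longrightarrow> distributed M lborel (W j) std_normal_density"
    and s: "0 < s" "s < 1/2"
  shows "prob {\<omega>\<in>space M. a * real (card J) \<le> (\<Sum>j\<in>J. (W j \<omega>)\<^sup>2)}
         \<le> (exp (- s * a) / sqrt (1 - 2 * s)) ^ card J"
proof -
  have [measurable]: "W j \<in> borel_measurable M" if "j \<in> J" for j
    using ind that by (auto simp: indep_vars_def)
  have "ennreal (prob {\<omega>\<in>space M. a * real (card J) \<le> (\<Sum>j\<in>J. (W j \<omega>)\<^sup>2)})
      = emeasure M {\<omega>\<in>space M. a * real (card J) \<le> (\<Sum>j\<in>J. (W j \<omega>)\<^sup>2)}"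
    by (simp add: emeasure_eq_measure)
  also have "\<dots> \<le> ennreal (exp (- s * (a * real (card J)))) *
      (\<integral>\<^sup>+\<omega>. ennreal (exp (s * (\<Sum>j\<in>J. (W j \<omega>)\<^sup>2))) * indicator (space M) \<omega> \<partial>M)"
    by (intro Chernoff_ineq_nn_integral_ge) (auto simp: s)
  also have "(\<integral>\<^sup>+\<omega>. ennreal (exp (s * (\<Sum>j\<in>J. (W j \<omega>)\<^sup>2))) * indicator (space M) \<omega> \<partial>M)
      = ennreal ((1 / sqrt (1 - 2 * s)) ^ card J)"
    by (subst nn_integral_exp_sum_squares[OF fin ind dist s(2), symmetric]) (auto intro!: nn_integral_cong)
  also have "ennreal (exp (- s * (a * real (card J)))) * ennreal ((1 / sqrt (1 - 2 * s)) ^ card J)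
      = ennreal ((exp (- s * a) / sqrt (1 - 2 * s)) ^ card J)"
  proof -
    have "exp (- s * (a * real (card J))) = exp (- s * a) ^ card J"
      by (simp add: exp_of_nat_mult[symmetric] algebra_simps)
    then show ?thesis by (simp add: ennreal_mult'[symmetric] power_divide)
  qed
  finally show ?thesis by (subst (asm) ennreal_le_iff) (use s in auto)
qed

lemma sum_squares_lower_tail:
  assumes fin: "finite J" and ind: "indep_vars (\<lambda>_. borel) W J"
    and dist: "\<And>j. j \<in> J \<Longrightarrow> distributed M lborel (W j) std_normal_density"
    and s: "0 < s"
  shows "prob {\<omega>\<in>space M. (\<Sum>j\<in>J. (W j \<omega>)\<^sup>2) \<le> a * real (card J)}
         \<le> (exp (s * a) / sqrt (1 + 2 * s)) ^ card J"
proof -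
  have [measurable]: "W j \<in> borel_measurable M" if "j \<in> J" for j
    using ind that by (auto simp: indep_vars_def)
  have "{\<omega>\<in>space M. (\<Sum>j\<in>J. (W j \<omega>)\<^sup>2) \<le> a * real (card J)}
      = {\<omega>\<in>space M. - (a * real (card J)) \<le> - (\<Sum>j\<in>J. (W j \<omega>)\<^sup>2)}"
    by auto
  then have "ennreal (prob {\<omega>\<in>space M. (\<Sum>j\<in>J. (W j \<omega>)\<^sup>2) \<le> a * real (card J)})
      = emeasure M {\<omega>\<in>space M. - (a * real (card J)) \<le> - (\<Sum>j\<in>J. (W j \<omega>)\<^sup>2)}"
    by (simp add: emeasure_eq_measure)
  also have "\<dots> \<le> ennreal (exp (- s * (- (a * real (card J))))) *
      (\<integral>\<^sup>+\<omega>. ennreal (exp (s * (- (\<Sum>j\<in>J. (W j \<omega>)\<^sup>2)))) * indicator (space M) \<omega> \<partial>M)"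
    by (intro Chernoff_ineq_nn_integral_ge) (auto simp: s)
  also have "(\<integral>\<^sup>+\<omega>. ennreal (exp (s * (- (\<Sum>j\<in>J. (W j \<omega>)\<^sup>2)))) * indicator (space M) \<omega> \<partial>M)
      = ennreal ((1 / sqrt (1 - 2 * (- s))) ^ card J)"
    by (subst nn_integral_exp_sum_squares[OF fin ind dist, symmetric]) (use s in \<open>auto intro!: nn_integral_cong\<close>)
  also have "ennreal (exp (- s * (- (a * real (card J))))) * ennreal ((1 / sqrt (1 - 2 * (- s))) ^ card J)
      = ennreal ((exp (s * a) / sqrt (1 + 2 * s)) ^ card J)"
  proof -
    have "exp (- s * (- (a * real (card J)))) = exp (s * a) ^ card J"
      by (simp add: exp_of_nat_mult[symmetric] algebra_simps)
    then show ?thesis by (simp add: ennreal_mult'[symmetric] power_divide)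
  qed
  finally show ?thesis by (subst (asm) ennreal_le_iff) (use s in auto)
qed

text \<open>Chernoff bounds with s = 3/26 for the upper and s = 1/8 for the lower tail.\<close>
lemma chi_square_concentration:
  assumes fin: "finite J" and ind: "indep_vars (\<lambda>_. borel) W J"
    and dist: "\<And>j. j \<in> J \<Longrightarrow> distributed M lborel (W j) std_normal_density"
  shows "prob {\<omega>\<in>space M. 3/10 * real (card J) \<le> \<bar>(\<Sum>j\<in>J. (W j \<omega>)\<^sup>2) - real (card J)\<bar>}
         \<le> 2 * exp (- real (card J) / 64)"
proof -
  have [measurable]: "W j \<in> borel_measurable M" if "j \<in> J" for j
    using ind that by (auto simp: indep_vars_def)
  let ?S = "\<lambda>\<omega>. \<Sum>j\<in>J. (W j \<omega>)\<^sup>2"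
  have upper: "prob {\<omega>\<in>space M. 13/10 * real (card J) \<le> ?S \<omega>} \<le> exp (- 1/64) ^ card J"
  proof -
    have "prob {\<omega>\<in>space M. 13/10 * real (card J) \<le> ?S \<omega>}
        \<le> (exp (- (3/26) * (13/10)) / sqrt (1 - 2 * (3/26))) ^ card J"
      by (rule sum_squares_upper_tail[OF fin ind dist]) simp_all
    also have "\<dots> \<le> exp (- 1/64) ^ card J"
      by (rule power_mono[OF chi_square_upper_rate_le]) simp
    finally show ?thesis .
  qed
  have lower: "prob {\<omega>\<in>space M. ?S \<omega> \<le> 7/10 * real (card J)} \<le> exp (- 1/64) ^ card J"
  proof -
    have "prob {\<omega>\<in>space M. ?S \<omega> \<le> 7/10 * real (card J)}
        \<le> (exp (1/8 * (7/10)) / sqrt (1 + 2 * (1/8))) ^ card J"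
      using sum_squares_lower_tail[OF fin ind dist, of "1/8" "7/10"] by simp
    also have "\<dots> \<le> exp (- 1/64) ^ card J"
      by (rule power_mono[OF chi_square_lower_rate_le]) simp
    finally show ?thesis .
  qed
  have sets_upper: "{\<omega>\<in>space M. 13/10 * real (card J) \<le> ?S \<omega>} \<in> sets M" by measurable
  have sets_lower: "{\<omega>\<in>space M. ?S \<omega> \<le> 7/10 * real (card J)} \<in> sets M" by measurable
  have "prob {\<omega>\<in>space M. 3/10 * real (card J) \<le> \<bar>?S \<omega> - real (card J)\<bar>}
      \<le> prob ({\<omega>\<in>space M. 13/10 * real (card J) \<le> ?S \<omega>} \<union> {\<omega>\<in>space M. ?S \<omega> \<le> 7/10 * real (card J)})"
    by (rule finite_measure_mono) (use sets_upper sets_lower in \<open>auto simp: abs_if split: if_splits\<close>)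
  also have "\<dots> \<le> exp (- 1/64) ^ card J + exp (- 1/64) ^ card J"
    using measure_Un_le[OF sets_upper sets_lower] upper lower by linarith
  also have "exp (- 1/64) ^ card J = exp (- real (card J) / 64)"
    by (simp add: exp_of_nat_mult[symmetric])
  finally show ?thesis by simp
qed

end

section \<open>Gaussian linear combinations\<close>

context prob_space
begin

lemma indep_vars_compose_restrict:
  assumes ind: "indep_vars (\<lambda>_. borel) X I"
    and K: "\<And>l. l \<in> L \<Longrightarrow> K l \<subseteq> I" and disj: "disjoint_family_on K L"
    and F: "\<And>l. l \<in> L \<Longrightarrow> F l \<in> borel_measurable (PiM (K l) (\<lambda>_. borel))"
    and Z: "\<And>l \<omega>. l \<in> L \<Longrightarrow> Z l \<omega> = F l (restrict (\<lambda>i. X i \<omega>) (K l))"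
  shows "indep_vars (\<lambda>_. borel) Z L"
proof -
  have "indep_vars (\<lambda>j. PiM (K j) (\<lambda>_. borel)) (\<lambda>j \<omega>. restrict (\<lambda>i. X i \<omega>) (K j)) L"
    by (rule indep_vars_restrict[OF ind K disj])
  then have "indep_vars (\<lambda>_. borel) (\<lambda>l \<omega>. F l (restrict (\<lambda>i. X i \<omega>) (K l))) L"
    by (rule indep_vars_compose2) (rule F)
  then show ?thesis
    by (rule indep_vars_cong[THEN iffD1, rotated -1]) (auto simp: Z fun_eq_iff)
qed

lemma distributed_normalized_lincomb_std_normal:
  fixes y :: "'i \<Rightarrow> real" and g :: "'i \<Rightarrow> 'q"
  assumes ind: "indep_vars (\<lambda>_. borel) X Q"
    and gauss: "\<And>q. q \<in> Q \<Longrightarrow> distributed M lborel (X q) std_normal_density"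
    and fin: "finite I" and inj: "inj_on g I" and gI: "g ` I \<subseteq> Q"
    and pos: "0 < sq_norm I y"
  shows "distributed M lborel (\<lambda>\<omega>. (\<Sum>i\<in>I. y i * X (g i) \<omega>) / sqrt (sq_norm I y)) std_normal_density"
proof -
  define I' where "I' = {i\<in>I. y i \<noteq> 0}"
  have "I' \<noteq> {}"
  proof
    assume "I' = {}"
    then have "sq_norm I y = 0" by (auto simp: I'_def sq_norm_def)
    with pos show False by simp
  qed
  have sum_I': "(\<Sum>i\<in>I. y i * X (g i) \<omega>) = (\<Sum>i\<in>I'. y i * X (g i) \<omega>)" for \<omega>
    by (rule sum.mono_neutral_right) (auto simp: I'_def fin)
  have norm_I': "sq_norm I y = (\<Sum>i\<in>I'. \<bar>y i\<bar>\<^sup>2)"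
    unfolding sq_norm_def power2_abs by (rule sum.mono_neutral_right) (auto simp: I'_def fin)
  have "indep_vars (\<lambda>_. borel) (\<lambda>i \<omega>. y i * X (g i) \<omega>) I'"
  proof (rule indep_vars_compose_restrict[OF ind, where K="\<lambda>i. {g i}" and F="\<lambda>i f. y i * f (g i)"])
    show "disjoint_family_on (\<lambda>i. {g i}) I'"
      using inj by (auto simp: disjoint_family_on_def I'_def inj_on_def)
    show "\<And>l. l \<in> I' \<Longrightarrow> (\<lambda>f. y l * f (g l)) \<in> borel_measurable (Pi\<^sub>M {g l} (\<lambda>_. borel))"
      by (intro borel_measurable_times measurable_const measurable_component_singleton) auto
  qed (use gI in \<open>auto simp: I'_def\<close>)
  moreover have "distributed M lborel (\<lambda>\<omega>. y i * X (g i) \<omega>) (normal_density 0 \<bar>y i\<bar>)" if "i \<in> I'" for i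
    using normal_density_affine[OF gauss[of "g i"], of "y i" 0] that gI by (auto simp: I'_def)
  ultimately have "distributed M lborel (\<lambda>\<omega>. \<Sum>i\<in>I'. y i * X (g i) \<omega>)
      (normal_density (\<Sum>i\<in>I'. 0) (sqrt (\<Sum>i\<in>I'. \<bar>y i\<bar>\<^sup>2)))"
    using fin \<open>I' \<noteq> {}\<close> by (intro sum_indep_normal) (auto simp: I'_def)
  then have "distributed M lborel (\<lambda>\<omega>. \<Sum>i\<in>I. y i * X (g i) \<omega>) (normal_density 0 (sqrt (sq_norm I y)))"
    by (simp add: sum_I' norm_I')
  with normal_standard_normal_convert[of "sqrt (sq_norm I y)"] pos show ?thesis by simp
qed

end

section \<open>Residue classes of columns of the block-Toeplitz matrix\<close>

definition toepUT :: "(nat \<Rightarrow> nat \<Rightarrow> real) \<Rightarrow> nat \<Rightarrow> nat \<Rightarrow> nat \<Rightarrow> (nat \<times> nat \<Rightarrow> real) \<Rightarrow> nat \<Rightarrow> real" where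
  "toepUT v m p k y j = (\<Sum>i\<in>rowIdx m p. y i * toepU v p k i j)"

definition column_class :: "nat \<Rightarrow> nat \<Rightarrow> nat \<Rightarrow> nat set" where
  "column_class p k c = {j\<in>{0..k-p}. j mod p = c}"

definition class_deviates ::
    "(nat \<Rightarrow> nat \<Rightarrow> real) \<Rightarrow> nat \<Rightarrow> nat \<Rightarrow> nat \<Rightarrow> (nat \<times> nat \<Rightarrow> real) \<Rightarrow> nat \<Rightarrow> bool" where
  "class_deviates v m p k y c \<longleftrightarrow>
     3/10 * real (card (column_class p k c)) * sq_norm (rowIdx m p) y
       < \<bar>(\<Sum>j\<in>column_class p k c. (toepUT v m p k y j)\<^sup>2)
           - real (card (column_class p k c)) * sq_norm (rowIdx m p) y\<bar>"

lemma quad_form_gramUU: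
  "bilinear_form (gramUU v p k) (rowIdx m p) y y = (\<Sum>j\<in>{0..k-p}. (toepUT v m p k y j)\<^sup>2)"
  unfolding gramUU_def toepUT_def by (rule bilinear_form_gram)

lemma sum_column_classes:
  assumes "0 < p"
  shows "(\<Sum>c<p. \<Sum>j\<in>column_class p k c. f j) = (\<Sum>j\<in>{0..k-p}. f j)"
proof -
  have "(\<lambda>j. j mod p) ` {0..k-p} \<subseteq> {..<p}" using assms by auto
  from sum.group[OF _ _ this, of f] show ?thesis by (simp add: column_class_def)
qed

lemma card_column_class_ge:
  assumes "c < p" "p \<le> k"
  shows "(k - p + 1) div p \<le> card (column_class p k c)"
proof -
  define N where "N = k - p + 1"
  have "(\<lambda>q. q * p + c) ` {..<N div p} \<subseteq> column_class p k c"
  proof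
    fix j assume "j \<in> (\<lambda>q. q * p + c) ` {..<N div p}"
    then obtain q where q: "q < N div p" "j = q * p + c" by auto
    have "(q + 1) * p \<le> N div p * p" using q(1) by (intro mult_right_mono) auto
    also have "\<dots> \<le> N" by (rule div_times_less_eq_dividend)
    finally have "q * p + p \<le> k - p + 1" by (simp add: N_def algebra_simps)
    then show "j \<in> column_class p k c" using q(2) assms by (simp add: column_class_def)
  qed
  moreover have "inj_on (\<lambda>q. q * p + c) {..<N div p}" using assms by (auto simp: inj_on_def)
  ultimately have "card {..<N div p} \<le> card (column_class p k c)"
    by (intro card_inj_on_le) (auto simp: column_class_def)
  then show ?thesis by (simp add: N_def)
qed

text \<open>Block rows a < p shift the time index by less than p, which separates the columns of
  one residue class.\<close>
lemma column_class_entries_disjoint: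
  assumes "j \<in> column_class p k c" "j' \<in> column_class p k c" "j \<noteq> j'" "a < p" "a' < p"
  shows "k - p + a - j \<noteq> k - p + a' - j'"
proof
  assume eq: "k - p + a - j = k - p + a' - j'"
  have "j \<le> k - p" "j' \<le> k - p" and same_class: "j mod p = j' mod p"
    using assms by (auto simp: column_class_def)
  with eq have shift: "a + j' = a' + j" by linarith
  show False
  proof (cases "j' \<le> j")
    case True
    then have "p dvd (j - j')" using same_class by (simp add: mod_eq_dvd_iff_nat)
    moreover have "0 < j - j'" "j - j' < p" using shift assms(3-5) True by linarith+
    ultimately show False using nat_dvd_not_less by blast
  next
    case False
    then have "p dvd (j' - j)" using same_class by (simp add: mod_eq_dvd_iff_nat[symmetric])
    moreover have "0 < j' - j" "j' - j < p" using shift assms(3-5) False by linarith+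
    ultimately show False using nat_dvd_not_less by blast
  qed
qed

lemma gramUU_deviation_le_of_classes:
  assumes "0 < p" and classes: "\<And>c. c < p \<Longrightarrow> \<not> class_deviates v m p k y c"
  shows "\<bar>bilinear_form (gramUU v p k) (rowIdx m p) y y - real (k - p + 1) * sq_norm (rowIdx m p) y\<bar>
         \<le> 3/10 * real (k - p + 1) * sq_norm (rowIdx m p) y"
proof -
  let ?n = "sq_norm (rowIdx m p) y"
  let ?d = "\<lambda>c. (\<Sum>j\<in>column_class p k c. (toepUT v m p k y j)\<^sup>2) - real (card (column_class p k c)) * ?n"
  have card_sum: "(\<Sum>c<p. real (card (column_class p k c))) = real (k - p + 1)"
    using sum_column_classes[OF assms(1), where k=k and f="\<lambda>_. 1::real"] by simp
  have "bilinear_form (gramUU v p k) (rowIdx m p) y y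
      = (\<Sum>c<p. \<Sum>j\<in>column_class p k c. (toepUT v m p k y j)\<^sup>2)"
    unfolding quad_form_gramUU by (rule sum_column_classes[OF assms(1), symmetric])
  moreover have "real (k - p + 1) * ?n = (\<Sum>c<p. real (card (column_class p k c)) * ?n)"
    by (simp only: card_sum[symmetric] sum_distrib_right)
  ultimately have "bilinear_form (gramUU v p k) (rowIdx m p) y y - real (k - p + 1) * ?n = (\<Sum>c<p. ?d c)"
    unfolding sum_subtractf by (rule arg_cong2[where f = minus])
  then have "\<bar>bilinear_form (gramUU v p k) (rowIdx m p) y y - real (k - p + 1) * ?n\<bar> \<le> (\<Sum>c<p. \<bar>?d c\<bar>)"
    using sum_abs[of ?d "{..<p}"] by (simp only:)
  also have "\<dots> \<le> (\<Sum>c<p. 3/10 * real (card (column_class p k c)) * ?n)"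
    using classes by (intro sum_mono) (simp add: class_deviates_def not_less)
  also have "\<dots> = (\<Sum>c<p. real (card (column_class p k c))) * (3/10 * ?n)"
    by (subst sum_distrib_right) (simp add: mult_ac)
  also have "\<dots> = 3/10 * real (k - p + 1) * ?n"
    by (simp only: card_sum ac_simps)
  finally show ?thesis .
qed

lemma toepUT_measurable:
  assumes "\<And>t r. r < m \<Longrightarrow> u t r \<in> borel_measurable M"
  shows "(\<lambda>\<omega>. toepUT (\<lambda>t r. u t r \<omega>) m p k y j) \<in> borel_measurable M"
  unfolding toepUT_def toepU_def
  by (intro borel_measurable_sum borel_measurable_times borel_measurable_const assms)
    (auto simp: rowIdx_def)

lemma gramUU_measurable:
  assumes "\<And>t r. r < m \<Longrightarrow> u t r \<in> borel_measurable M" and "i \<in> rowIdx m p" "i' \<in> rowIdx m p"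
  shows "(\<lambda>\<omega>. gramUU (\<lambda>t r. u t r \<omega>) p k i i') \<in> borel_measurable M"
  unfolding gramUU_def toepU_def
  by (intro borel_measurable_sum borel_measurable_times assms(1)) (use assms(2,3) in \<open>auto simp: rowIdx_def\<close>)

lemma sets_class_deviates:
  assumes "\<And>t r. r < m \<Longrightarrow> u t r \<in> borel_measurable M"
  shows "{\<omega>\<in>space M. class_deviates (\<lambda>t r. u t r \<omega>) m p k y c} \<in> sets M"
proof -
  have [measurable]: "(\<lambda>\<omega>. toepUT (\<lambda>t r. u t r \<omega>) m p k y j) \<in> borel_measurable M" for j
    by (rule toepUT_measurable[OF assms])
  show ?thesis unfolding class_deviates_def by measurable
qed

context prob_space
begin

text \<open>Entry j of U^T y is a combination of the distinct independent Gaussians u_(k-p+a-j),r.\<close>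
lemma distributed_toepUT_std_normal:
  fixes u :: "nat \<Rightarrow> nat \<Rightarrow> 'a \<Rightarrow> real"
  assumes ind: "indep_vars (\<lambda>_. borel) (\<lambda>(t, r). u t r) (UNIV \<times> {..<m})"
    and gauss: "\<And>t r. r < m \<Longrightarrow> distributed M lborel (u t r) std_normal_density"
    and pos: "0 < sq_norm (rowIdx m p) y" and "j \<le> k - p"
  shows "distributed M lborel (\<lambda>\<omega>. toepUT (\<lambda>t r. u t r \<omega>) m p k y j / sqrt (sq_norm (rowIdx m p) y))
           std_normal_density"
proof -
  define X where "X = (\<lambda>(t, r). u t r)"
  define g where "g = (\<lambda>i :: nat \<times> nat. (k - p + fst i - j, snd i))"
  have "inj_on g (rowIdx m p)" using \<open>j \<le> k - p\<close> by (auto simp: inj_on_def g_def)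
  moreover have "g ` rowIdx m p \<subseteq> UNIV \<times> {..<m}" by (auto simp: g_def rowIdx_def)
  moreover have "distributed M lborel (X q) std_normal_density" if "q \<in> UNIV \<times> {..<m}" for q
    using that gauss by (auto simp: X_def)
  ultimately have "distributed M lborel
      (\<lambda>\<omega>. (\<Sum>i\<in>rowIdx m p. y i * X (g i) \<omega>) / sqrt (sq_norm (rowIdx m p) y)) std_normal_density"
    using pos by (intro distributed_normalized_lincomb_std_normal[OF ind[folded X_def]]) (auto simp: rowIdx_def)
  then show ?thesis by (simp add: X_def g_def toepUT_def toepU_def)
qed

lemma indep_vars_toepUT_column_class:
  fixes u :: "nat \<Rightarrow> nat \<Rightarrow> 'a \<Rightarrow> real"
  assumes ind: "indep_vars (\<lambda>_. borel) (\<lambda>(t, r). u t r) (UNIV \<times> {..<m})"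
  shows "indep_vars (\<lambda>_. borel) (\<lambda>j \<omega>. toepUT (\<lambda>t r. u t r \<omega>) m p k y j / \<sigma>) (column_class p k c)"
proof -
  define g where "g = (\<lambda>j (i :: nat \<times> nat). (k - p + fst i - j, snd i))"
  show ?thesis
  proof (rule indep_vars_compose_restrict[OF ind, where K = "\<lambda>j. g j ` rowIdx m p"
        and F = "\<lambda>j f. (\<Sum>i\<in>rowIdx m p. y i * f (g j i)) / \<sigma>"])
    show "disjoint_family_on (\<lambda>j. g j ` rowIdx m p) (column_class p k c)"
      using column_class_entries_disjoint by (fastforce simp: disjoint_family_on_def g_def rowIdx_def)
    show "(\<lambda>f. (\<Sum>i\<in>rowIdx m p. y i * f (g j i)) / \<sigma>) \<in> borel_measurable (Pi\<^sub>M (g j ` rowIdx m p) (\<lambda>_. borel))"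
      for j
      by (intro borel_measurable_divide borel_measurable_sum borel_measurable_times measurable_const
          measurable_component_singleton) auto
  qed (auto simp: g_def rowIdx_def toepUT_def toepU_def)
qed

lemma prob_class_deviates_le:
  fixes u :: "nat \<Rightarrow> nat \<Rightarrow> 'a \<Rightarrow> real"
  assumes ind: "indep_vars (\<lambda>_. borel) (\<lambda>(t, r). u t r) (UNIV \<times> {..<m})"
    and gauss: "\<And>t r. r < m \<Longrightarrow> distributed M lborel (u t r) std_normal_density"
  shows "prob {\<omega>\<in>space M. class_deviates (\<lambda>t r. u t r \<omega>) m p k y c}
         \<le> 2 * exp (- real (card (column_class p k c)) / 64)"
proof (cases "sq_norm (rowIdx m p) y = 0")
  case True
  then have "y i = 0" if "i \<in> rowIdx m p" for i
    using sq_norm_eq_0_imp[OF _ True that] by (simp add: rowIdx_def)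
  then have "toepUT v m p k y j = 0" for v j
    unfolding toepUT_def by simp
  with True have empty: "{\<omega>\<in>space M. class_deviates (\<lambda>t r. u t r \<omega>) m p k y c} = {}"
    by (simp add: class_deviates_def)
  show ?thesis unfolding empty by simp
next
  case False
  define J where "J = column_class p k c"
  define \<sigma> where "\<sigma> = sqrt (sq_norm (rowIdx m p) y)"
  define W where "W = (\<lambda>j \<omega>. toepUT (\<lambda>t r. u t r \<omega>) m p k y j / \<sigma>)"
  have pos: "0 < sq_norm (rowIdx m p) y" using False sq_norm_nonneg by (metis less_eq_real_def)
  have indep_W: "indep_vars (\<lambda>_. borel) W J"
    unfolding W_def J_def by (rule indep_vars_toepUT_column_class[OF ind])
  have "distributed M lborel (W j) std_normal_density" if "j \<in> J" for j
  proof -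
    have "j \<le> k - p" using that by (simp add: J_def column_class_def)
    then show ?thesis unfolding W_def \<sigma>_def by (intro distributed_toepUT_std_normal[OF ind gauss pos]) auto
  qed
  with indep_W have chi: "prob {\<omega>\<in>space M. 3/10 * real (card J) \<le> \<bar>(\<Sum>j\<in>J. (W j \<omega>)\<^sup>2) - real (card J)\<bar>}
      \<le> 2 * exp (- real (card J) / 64)"
    by (intro chi_square_concentration) (simp_all add: J_def column_class_def)
  have [measurable]: "W j \<in> borel_measurable M" if "j \<in> J" for j
    using indep_W that by (auto simp: indep_vars_def)
  have "{\<omega>\<in>space M. class_deviates (\<lambda>t r. u t r \<omega>) m p k y c}
      \<subseteq> {\<omega>\<in>space M. 3/10 * real (card J) \<le> \<bar>(\<Sum>j\<in>J. (W j \<omega>)\<^sup>2) - real (card J)\<bar>}"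
  proof safe
    fix \<omega> assume "\<omega> \<in> space M" "class_deviates (\<lambda>t r. u t r \<omega>) m p k y c"
    then have "3/10 * real (card J) * \<sigma>\<^sup>2 < \<bar>(\<Sum>j\<in>J. (W j \<omega>)\<^sup>2) * \<sigma>\<^sup>2 - real (card J) * \<sigma>\<^sup>2\<bar>"
      using pos by (simp add: class_deviates_def W_def power_divide sum_divide_distrib[symmetric] J_def \<sigma>_def)
    then have "3/10 * real (card J) * \<sigma>\<^sup>2 < \<bar>(\<Sum>j\<in>J. (W j \<omega>)\<^sup>2) - real (card J)\<bar> * \<sigma>\<^sup>2"
      by (simp add: abs_mult left_diff_distrib[symmetric])
    then show "3/10 * real (card J) \<le> \<bar>(\<Sum>j\<in>J. (W j \<omega>)\<^sup>2) - real (card J)\<bar>"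
      using pos by (simp add: \<sigma>_def)
  qed
  then have "prob {\<omega>\<in>space M. class_deviates (\<lambda>t r. u t r \<omega>) m p k y c}
      \<le> prob {\<omega>\<in>space M. 3/10 * real (card J) \<le> \<bar>(\<Sum>j\<in>J. (W j \<omega>)\<^sup>2) - real (card J)\<bar>}"
    by (intro finite_measure_mono) measurable
  with chi show ?thesis by (simp add: J_def)
qed

lemma prob_class_deviates_on_net_le:
  fixes u :: "nat \<Rightarrow> nat \<Rightarrow> 'a \<Rightarrow> real"
  assumes ind: "indep_vars (\<lambda>_. borel) (\<lambda>(t, r). u t r) (UNIV \<times> {..<m})"
    and gauss: "\<And>t r. r < m \<Longrightarrow> distributed M lborel (u t r) std_normal_density"
    and "finite S" "p \<le> k"
  shows "prob (\<Union>y\<in>S. \<Union>c<p. {\<omega>\<in>space M. class_deviates (\<lambda>t r. u t r \<omega>) m p k y c})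
         \<le> real (card S) * (2 * real p * exp (- real ((k - p + 1) div p) / 64))"
proof -
  let ?B = "\<lambda>y c. {\<omega>\<in>space M. class_deviates (\<lambda>t r. u t r \<omega>) m p k y c}"
  have B_sets: "?B y c \<in> sets M" for y c
    by (rule sets_class_deviates) (use gauss distributed_measurable in fastforce)
  have B_prob: "prob (?B y c) \<le> 2 * exp (- real ((k - p + 1) div p) / 64)" if "c < p" for y c
  proof -
    have "real ((k - p + 1) div p) \<le> real (card (column_class p k c))"
      using card_column_class_ge[OF that \<open>p \<le> k\<close>] by simp
    then have "exp (- real (card (column_class p k c)) / 64) \<le> exp (- real ((k - p + 1) div p) / 64)"
      by simp
    with prob_class_deviates_le[OF ind gauss, of p k y c] show ?thesis by linarith
  qed
  have "prob (\<Union>y\<in>S. \<Union>c<p. ?B y c) \<le> (\<Sum>y\<in>S. prob (\<Union>c<p. ?B y c))"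
    by (rule measure_UNION_le[OF \<open>finite S\<close>]) (use B_sets in auto)
  also have "\<dots> \<le> (\<Sum>y\<in>S. \<Sum>c<p. prob (?B y c))"
    by (intro sum_mono measure_UNION_le) (use B_sets in auto)
  also have "\<dots> \<le> (\<Sum>y\<in>S. \<Sum>c<p. 2 * exp (- real ((k - p + 1) div p) / 64))"
    by (intro sum_mono B_prob) simp
  finally show ?thesis by simp
qed

end

section \<open>From the net to the Loewner bounds\<close>

lemma loewner_between_of_net:
  fixes G :: "'i \<Rightarrow> 'i \<Rightarrow> real"
  assumes fin: "finite I" and sym: "\<And>i i'. i \<in> I \<Longrightarrow> i' \<in> I \<Longrightarrow> G i i' = G i' i" and "0 \<le> N"
    and net: "\<And>x. sq_norm I x \<le> 1 \<Longrightarrow>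
      \<exists>y\<in>S. sq_norm I (\<lambda>i. x i - y i) \<le> (1/9)\<^sup>2 \<and> sq_norm I y \<le> (1 + 1/9)\<^sup>2"
    and dev: "\<And>y. y \<in> S \<Longrightarrow> \<bar>bilinear_form G I y y - N * sq_norm I y\<bar> \<le> 3/10 * N * sq_norm I y"
  shows "loewner_between I (1/2 * N) G (3/2 * N)"
proof -
  define A where "A = (\<lambda>i i'. G i i' - N * (if i = i' then 1 else 0))"
  have A_form: "bilinear_form A I x x = bilinear_form G I x x - N * sq_norm I x" for x
    unfolding A_def by (rule bilinear_form_diag_shift[OF fin])
  define S' where "S' = {y\<in>S. sq_norm I y \<le> (1 + 1/9)\<^sup>2}"
  have S'_bound: "\<bar>bilinear_form A I y y\<bar> \<le> 3/10 * N * (1 + 1/9)\<^sup>2" if "y \<in> S'" for y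
  proof -
    from that have "y \<in> S" "sq_norm I y \<le> (1 + 1/9)\<^sup>2" by (auto simp: S'_def)
    then have "3/10 * N * sq_norm I y \<le> 3/10 * N * (1 + 1/9)\<^sup>2"
      using \<open>0 \<le> N\<close> by (intro mult_left_mono) auto
    with dev[OF \<open>y \<in> S\<close>] show ?thesis unfolding A_form by linarith
  qed
  have A_sym: "\<And>i i'. i \<in> I \<Longrightarrow> i' \<in> I \<Longrightarrow> A i i' = A i' i"
    using sym by (simp add: A_def)
  have S'_net: "\<exists>y\<in>S'. sq_norm I (\<lambda>i. x i - y i) \<le> (1/9)\<^sup>2 \<and> sq_norm I y \<le> (1 + 1/9)\<^sup>2"
    if "sq_norm I x \<le> 1" for x
    using net[OF that] by (auto simp: S'_def)
  have bound: "\<bar>bilinear_form A I x x\<bar> \<le> (3/10 * N * (1 + 1/9)\<^sup>2) / (1 - 2 * (1/9) - (1/9)\<^sup>2) * sq_norm I x" for x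
    by (rule quad_form_bound_of_net[OF fin A_sym _ _ S'_net S'_bound]) (simp_all add: power2_eq_square)
  have factor: "(3/10 * N * (1 + 1/9)\<^sup>2) / (1 - 2 * (1/9) - (1/9)\<^sup>2) = 15/31 * N"
    by (simp add: power2_eq_square)
  have dev_all: "\<bar>bilinear_form G I x x - N * sq_norm I x\<bar> \<le> 15/31 * (N * sq_norm I x)" for x
    using bound[of x] unfolding factor A_form by (simp only: mult.assoc)
  show ?thesis
    unfolding loewner_between_iff_forms
  proof
    fix x
    have "0 \<le> N * sq_norm I x" using \<open>0 \<le> N\<close> sq_norm_nonneg[of I x] by simp
    with dev_all[of x] show "1/2 * N * sq_norm I x \<le> bilinear_form G I x x \<and> bilinear_form G I x x \<le> 3/2 * N * sq_norm I x"
      unfolding abs_le_iff mult.assoc by linarith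
  qed
qed

lemma loewner_between_gramUU_of_net:
  assumes "0 < p"
    and net: "\<And>x. sq_norm (rowIdx m p) x \<le> 1 \<Longrightarrow>
      \<exists>y\<in>S. sq_norm (rowIdx m p) (\<lambda>i. x i - y i) \<le> (1/9)\<^sup>2 \<and> sq_norm (rowIdx m p) y \<le> (1 + 1/9)\<^sup>2"
    and classes: "\<And>y c. y \<in> S \<Longrightarrow> c < p \<Longrightarrow> \<not> class_deviates v m p k y c"
  shows "loewner_between (rowIdx m p) (1/2 * real (k - p + 1)) (gramUU v p k) (3/2 * real (k - p + 1))"
proof (rule loewner_between_of_net[OF _ _ _ net])
  show "\<And>i i'. gramUU v p k i i' = gramUU v p k i' i"
    by (simp add: gramUU_def mult.commute)
  show "\<And>y. y \<in> S \<Longrightarrow> \<bar>bilinear_form (gramUU v p k) (rowIdx m p) y y - real (k - p + 1) * sq_norm (rowIdx m p) y\<bar>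
      \<le> 3/10 * real (k - p + 1) * sq_norm (rowIdx m p) y"
    using classes by (intro gramUU_deviation_le_of_classes[OF \<open>0 < p\<close>])
qed (simp_all add: rowIdx_def)

section \<open>Measurability of the Loewner condition\<close>

lemma LIMSEQ_floor_mult_div: "(\<lambda>n. of_int \<lfloor>a * real (Suc n)\<rfloor> / real (Suc n)) \<longlonglongrightarrow> (a::real)"
proof (rule tendsto_sandwich[where f="\<lambda>n. a - inverse (real (Suc n))" and h="\<lambda>n. a"])
  show "\<forall>\<^sub>F n in sequentially. a - inverse (real (Suc n)) \<le> of_int \<lfloor>a * real (Suc n)\<rfloor> / real (Suc n)"
  proof (intro always_eventually allI)
    fix n
    have "a * real (Suc n) - 1 \<le> of_int \<lfloor>a * real (Suc n)\<rfloor>" by linarith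
    then have "(a * real (Suc n) - 1) / real (Suc n) \<le> of_int \<lfloor>a * real (Suc n)\<rfloor> / real (Suc n)"
      by (intro divide_right_mono) auto
    then show "a - inverse (real (Suc n)) \<le> of_int \<lfloor>a * real (Suc n)\<rfloor> / real (Suc n)"
      by (simp add: field_simps)
  qed
  show "\<forall>\<^sub>F n in sequentially. of_int \<lfloor>a * real (Suc n)\<rfloor> / real (Suc n) \<le> a"
    by (intro always_eventually allI) (simp add: field_simps)
  show "(\<lambda>n. a - inverse (real (Suc n))) \<longlonglongrightarrow> a"
    using tendsto_diff[OF tendsto_const LIMSEQ_inverse_real_of_nat, of a] by simp
qed auto

lemma loewner_between_iff_rational:
  fixes A :: "'i \<Rightarrow> 'i \<Rightarrow> real"
  assumes fin: "finite I"
  shows "loewner_between I c A C \<longleftrightarrow>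
    (\<forall>x\<in>PiE I (\<lambda>_. \<rat>). c * sq_norm I x \<le> bilinear_form A I x x \<and> bilinear_form A I x x \<le> C * sq_norm I x)"
    (is "_ \<longleftrightarrow> ?rational")
proof
  assume ?rational
  show "loewner_between I c A C"
    unfolding loewner_between_iff_forms
  proof
    fix x :: "'i \<Rightarrow> real"
    define xs where "xs = (\<lambda>n. restrict (\<lambda>i. of_int \<lfloor>x i * real (Suc n)\<rfloor> / real (Suc n)) I)"
    have xs_rational: "xs n \<in> PiE I (\<lambda>_. \<rat>)" for n
      unfolding xs_def by (intro restrict_PiE_iff[THEN iffD2] ballI Rats_divide Rats_of_int Rats_of_nat)
    have coord_lim: "(\<lambda>n. xs n i) \<longlonglongrightarrow> x i" if "i \<in> I" for i
      using that LIMSEQ_floor_mult_div[of "x i"] by (simp add: xs_def)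
    have norm_lim: "(\<lambda>n. sq_norm I (xs n)) \<longlonglongrightarrow> sq_norm I x"
      unfolding sq_norm_def by (intro tendsto_sum tendsto_power coord_lim)
    have form_lim: "(\<lambda>n. bilinear_form A I (xs n) (xs n)) \<longlonglongrightarrow> bilinear_form A I x x"
      unfolding bilinear_form_def by (intro tendsto_sum tendsto_mult tendsto_const coord_lim)
    have "c * sq_norm I x \<le> bilinear_form A I x x"
      by (rule LIMSEQ_le[OF tendsto_mult[OF tendsto_const norm_lim] form_lim])
        (use \<open>?rational\<close> xs_rational in blast)
    moreover have "bilinear_form A I x x \<le> C * sq_norm I x"
      by (rule LIMSEQ_le[OF form_lim tendsto_mult[OF tendsto_const norm_lim]])
        (use \<open>?rational\<close> xs_rational in blast)
    ultimately show "c * sq_norm I x \<le> bilinear_form A I x x \<and> bilinear_form A I x x \<le> C * sq_norm I x" ..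
  qed
qed (auto simp: loewner_between_iff_forms)

lemma sets_loewner_between:
  fixes G :: "'a \<Rightarrow> 'i \<Rightarrow> 'i \<Rightarrow> real"
  assumes fin: "finite I"
    and G: "\<And>i i'. i \<in> I \<Longrightarrow> i' \<in> I \<Longrightarrow> (\<lambda>\<omega>. G \<omega> i i') \<in> borel_measurable M"
  shows "{\<omega>\<in>space M. loewner_between I c (G \<omega>) C} \<in> sets M"
proof -
  define Q where "Q = PiE I (\<lambda>_::'i. \<rat>::real set)"
  define qs where "qs = from_nat_into Q"
  have range_qs: "range qs = Q"
    unfolding qs_def Q_def
    by (rule range_from_nat_into) (auto simp: PiE_eq_empty_iff intro: countable_PiE fin countable_rat)
  define P where "P = (\<lambda>x \<omega>. c * sq_norm I x \<le> bilinear_form (G \<omega>) I x x \<and> bilinear_form (G \<omega>) I x x \<le> C * sq_norm I x)"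
  have "{\<omega>\<in>space M. loewner_between I c (G \<omega>) C} = {\<omega>\<in>space M. \<forall>n. P (qs n) \<omega>}"
    unfolding loewner_between_iff_rational[OF fin] P_def Q_def[symmetric] range_qs[symmetric] by simp
  also have "\<dots> \<in> sets M"
  proof (intro sets.sets_Collect_countable_All)
    fix n
    have [measurable]: "(\<lambda>\<omega>. bilinear_form (G \<omega>) I (qs n) (qs n)) \<in> borel_measurable M"
      unfolding bilinear_form_def by (intro borel_measurable_sum borel_measurable_times borel_measurable_const G) auto
    show "{\<omega>\<in>space M. P (qs n) \<omega>} \<in> sets M" unfolding P_def by measurable
  qed
  finally show ?thesis .
qed

section \<open>The numerical condition on k\<close>

lemma div_ge_of_mult_le:
  assumes "0 < p" "c * real p \<le> real N"
  shows "c - 1 \<le> real (N div p)"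
proof -
  have "N = N div p * p + N mod p" by simp
  moreover have "N mod p < p" using assms(1) by simp
  ultimately have "N < N div p * p + p" by linarith
  then have "real N < real (N div p) * real p + real p"
    by (metis of_nat_add of_nat_less_iff of_nat_mult)
  then have "c * real p < (real (N div p) + 1) * real p"
    using assms(2) unfolding distrib_right by linarith
  then show ?thesis using assms(1) by (simp add: mult_less_cancel_right)
qed

lemma mult_power_28_81_le_1:
  assumes "p \<le> n"
  shows "real p * (28/81) ^ n \<le> 1"
proof -
  have "real p \<le> 2 ^ p" by (simp add: less_exp less_imp_le)
  also have "\<dots> \<le> (81/28) ^ p" by (intro power_mono) auto
  finally have "real p * (28/81) ^ n \<le> (81/28) ^ p * (28/81) ^ p"
    using assms by (intro mult_mono power_decreasing) auto
  also have "\<dots> = 1" by (simp flip: power_mult_distrib)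
  finally show ?thesis .
qed

text \<open>With X = mp ln 9 + ln 2 + ln (1/\<delta>), the hypothesis says that each residue class has at
  least 128 X - 1 columns, so that exp (- #class / 64) \<le> e^(1/64) \<delta>^2 / (4 * 81^(mp)).\<close>
lemma net_failure_bound_le:
  fixes m p k :: nat and \<delta> :: real
  assumes "1 \<le> m" "1 \<le> p" "p \<le> k" "0 < \<delta>" "\<delta> < 1"
    and k: "real k \<ge> real p + 128 * (real m * (real p)\<^sup>2 * ln 9 + real p * ln 2 + real p * ln (1 / \<delta>))"
  shows "28 ^ (m * p) * (2 * real p * exp (- real ((k - p + 1) div p) / 64)) \<le> \<delta>"
proof -
  define n where "n = m * p"
  define X where "X = real n * ln 9 + ln 2 + ln (1 / \<delta>)"
  define q where "q = (k - p + 1) div p"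
  have "real m * (real p)\<^sup>2 * ln 9 + real p * ln 2 + real p * ln (1 / \<delta>) = X * real p"
    unfolding X_def n_def by (simp add: power2_eq_square algebra_simps)
  with k \<open>p \<le> k\<close> have "128 * X * real p \<le> real (k - p + 1)"
    by (simp add: of_nat_diff)
  then have "128 * X - 1 \<le> real q"
    unfolding q_def using \<open>1 \<le> p\<close> by (intro div_ge_of_mult_le) auto
  then have "exp (- real q / 64) \<le> exp (1/64 - 2 * X)"
    by simp
  also have "\<dots> = exp (1/64) / (exp X)\<^sup>2"
    by (simp only: exp_diff exp_double)
  also have "exp X = 9 ^ n * 2 / \<delta>"
    using \<open>0 < \<delta>\<close> by (simp add: X_def exp_add exp_of_nat_mult)
  also have "exp (1/64) / (9 ^ n * 2 / \<delta>)\<^sup>2 = exp (1/64) * \<delta>\<^sup>2 / (4 * 81 ^ n)"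
    using power_mult_distrib[of "9::real" 9 n] by (simp add: power2_eq_square field_simps)
  finally have "28 ^ n * (2 * real p * exp (- real q / 64)) \<le> 28 ^ n * (2 * real p * (exp (1/64) * \<delta>\<^sup>2 / (4 * 81 ^ n)))"
    by (intro mult_left_mono) auto
  also have "\<dots> = (real p * (28/81) ^ n) * exp (1/64) * \<delta>\<^sup>2 / 2"
    by (simp add: power_divide mult_ac)
  also have "\<dots> \<le> 1 * 2 * \<delta>\<^sup>2 / 2"
  proof (intro divide_right_mono mult_right_mono mult_mono)
    show "real p * (28/81) ^ n \<le> 1"
      using \<open>1 \<le> m\<close> by (intro mult_power_28_81_le_1) (simp add: n_def)
    show "exp (1/64::real) \<le> 2"
      using exp_bound[of "1/64::real"] by (simp add: power2_eq_square)
  qed auto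
  also have "\<dots> \<le> \<delta>"
    using \<open>0 < \<delta>\<close> \<open>\<delta> < 1\<close> by (simp add: power2_eq_square mult_left_le_one_le)
  finally show ?thesis by (simp add: n_def q_def)
qed

lemma (in prob_space) prob_loewner_between_gramUU_ge:
  fixes u :: "nat \<Rightarrow> nat \<Rightarrow> 'a \<Rightarrow> real"
  assumes ind: "indep_vars (\<lambda>_. borel) (\<lambda>(t, r). u t r) (UNIV \<times> {..<m})"
    and gauss: "\<And>t r. r < m \<Longrightarrow> distributed M lborel (u t r) std_normal_density"
    and "1 \<le> p" "p \<le> k" "finite S"
    and net: "\<And>x. sq_norm (rowIdx m p) x \<le> 1 \<Longrightarrow>
      \<exists>y\<in>S. sq_norm (rowIdx m p) (\<lambda>i. x i - y i) \<le> (1/9)\<^sup>2 \<and> sq_norm (rowIdx m p) y \<le> (1 + 1/9)\<^sup>2"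
  shows "1 - real (card S) * (2 * real p * exp (- real ((k - p + 1) div p) / 64))
    \<le> prob {\<omega> \<in> space M. loewner_between (rowIdx m p) ((1/2) * real (k - p + 1))
                 (gramUU (\<lambda>t r. u t r \<omega>) p k) ((3/2) * real (k - p + 1))}"
    (is "_ \<le> prob ?good")
proof -
  have u_meas: "u t r \<in> borel_measurable M" if "r < m" for t r
    using distributed_measurable[OF gauss[OF that]] by simp
  define bad where "bad = (\<Union>y\<in>S. \<Union>c<p. {\<omega>\<in>space M. class_deviates (\<lambda>t r. u t r \<omega>) m p k y c})"
  have bad_sets: "bad \<in> sets M"
    unfolding bad_def by (intro sets.finite_UN finite_lessThan \<open>finite S\<close> sets_class_deviates[OF u_meas])
  have "space M - bad \<subseteq> ?good"
  proof
    fix \<omega> assume "\<omega> \<in> space M - bad"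
    then have "\<omega> \<in> space M" "\<And>y c. y \<in> S \<Longrightarrow> c < p \<Longrightarrow> \<not> class_deviates (\<lambda>t r. u t r \<omega>) m p k y c"
      by (auto simp: bad_def)
    then have "loewner_between (rowIdx m p) ((1/2) * real (k - p + 1))
        (gramUU (\<lambda>t r. u t r \<omega>) p k) ((3/2) * real (k - p + 1))"
      using \<open>1 \<le> p\<close> by (intro loewner_between_gramUU_of_net[OF _ net]) auto
    with \<open>\<omega> \<in> space M\<close> show "\<omega> \<in> ?good" by simp
  qed
  moreover have "?good \<in> sets M"
    using u_meas by (intro sets_loewner_between gramUU_measurable) (auto simp: rowIdx_def)
  ultimately have "prob (space M - bad) \<le> prob ?good"
    by (rule finite_measure_mono)
  then have "1 - prob bad \<le> prob ?good"
    by (simp only: prob_compl[OF bad_sets])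
  moreover have "prob bad \<le> real (card S) * (2 * real p * exp (- real ((k - p + 1) div p) / 64))"
    unfolding bad_def using ind gauss \<open>finite S\<close> \<open>p \<le> k\<close> by (rule prob_class_deviates_on_net_le)
  ultimately show ?thesis by linarith
qed

theorem mainTheorem10:
  fixes M :: "'a measure" and u :: "nat \<Rightarrow> nat \<Rightarrow> 'a \<Rightarrow> real"
    and m p k :: nat and \<delta> :: real
  assumes "prob_space M"
    and indep: "prob_space.indep_vars M (\<lambda>_. borel) (\<lambda>(t, r). u t r) (UNIV \<times> {..<m})"
    and gauss: "\<And>t r. r < m \<Longrightarrow> distributed M lborel (u t r) (\<lambda>x. ennreal (std_normal_density x))"
    and "m \<ge> 1" and "p \<ge> 1" and "k \<ge> p"
    and "0 < \<delta>" and "\<delta> < 1"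
    and "real k \<ge> real p + 128 * (real m * (real p)\<^sup>2 * ln 9 + real p * ln 2 + real p * ln (1 / \<delta>))"
  shows "measure M {\<omega> \<in> space M.
            loewner_between (rowIdx m p) ((1/2) * real (k - p + 1))
              (gramUU (\<lambda>t r. u t r \<omega>) p k) ((3/2) * real (k - p + 1))} \<ge> 1 - \<delta>"
proof -
  interpret prob_space M by fact
  have rows: "finite (rowIdx m p)" "rowIdx m p \<noteq> {}" "card (rowIdx m p) = m * p"
    using \<open>m \<ge> 1\<close> \<open>p \<ge> 1\<close> by (auto simp: rowIdx_def card_cartesian_product lessThan_empty_iff)
  obtain S where S: "finite S" "real (card S) \<le> 28 ^ (m * p)"
    and net: "\<And>x. sq_norm (rowIdx m p) x \<le> 1 \<Longrightarrow> \<exists>y\<in>S. sq_norm (rowIdx m p) (\<lambda>i. x i - y i) \<le> (1/9)\<^sup>2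
      \<and> sq_norm (rowIdx m p) y \<le> (1 + 1/9)\<^sup>2"
    using exists_net_unit_ball[OF rows(1,2)] unfolding rows(3) by blast
  have "real (card S) * (2 * real p * exp (- real ((k - p + 1) div p) / 64))
      \<le> 28 ^ (m * p) * (2 * real p * exp (- real ((k - p + 1) div p) / 64))"
    using S(2) by (intro mult_right_mono) auto
  also have "\<dots> \<le> \<delta>"
    using assms(4-) by (intro net_failure_bound_le) auto
  finally show ?thesis
    using prob_loewner_between_gramUU_ge[OF indep gauss \<open>p \<ge> 1\<close> \<open>k \<ge> p\<close> S(1) net] by linarith
qed

end
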